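(* The following problem is decidable: given synchronized automata computing Fibonacci-synchronized sequences $(s(n))_{n\ge0}$ and $(s'(n))_{n\ge0}$, decide whether $(s'(n))$ is the distinctness transform of $(s(n))$.
   Context: $\mathbb{N}=\{0,1,2,\ldots\}$. The distinctness transform of a sequence $(s(n))_{n\ge0}$ over $\mathbb{N}$ is the sequence obtained by scanning $s(0),s(1),\ldots$ from left to right and deleting every term whose value already occurred earlier; equivalently it lists the distinct values of $s$, each once, in order of their first occurrence. The Fibonacci (Zeckendorf) representation of $n\in\mathbb{N}$ is the binary string $e_1\cdots e_t$ with no two consecutive $1$'s and $n=\sum_{i=1}^t e_iF_{t-i+2}$ (where $F_0=0,F_1=1,F_k=F_{k-1}+F_{k-2}$), leading zeros being allowed/ignored. A sequence $s:\mathbb{N}\to\mathbb{N}$ is Fibonacci-synchronized if there is a deterministic finite automaton (a synchronized automaton) over the alphabet $\{0,1\}^2$ which, reading the Fibonacci representations of a pair $(n,x)$ in parallel (most significant digit first, the shorter one padded with leading zeros), accepts if and only if $x=s(n)$. *)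

theory Defs
  imports Main "HOL-Library.Nat_Bijection" "HOL-Number_Theory.Fib" "HOL-Library.Infinite_Set"
begin

datatype recf =
    Zero
  | Succ
  | Proj nat
  | Comp recf "recf list"
  | PrimRec recf recf
  | Mu recf

inductive eval :: "recf \<Rightarrow> nat list \<Rightarrow> nat \<Rightarrow> bool" where
  eval_Zero: "eval Zero xs 0"
| eval_Succ: "eval Succ (x # xs) (Suc x)"
| eval_Proj: "i < length xs \<Longrightarrow> eval (Proj i) xs (xs ! i)"
| eval_Comp: "list_all2 (\<lambda>g y. eval g xs y) gs ys \<Longrightarrow> eval f ys z \<Longrightarrow> eval (Comp f gs) xs z"
| eval_PrimRec0: "eval g xs y \<Longrightarrow> eval (PrimRec g h) (0 # xs) y"
| eval_PrimRecS: "eval (PrimRec g h) (n # xs) y \<Longrightarrow> eval h (n # y # xs) z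
      \<Longrightarrow> eval (PrimRec g h) (Suc n # xs) z"
| eval_Mu: "eval f (n # xs) 0 \<Longrightarrow> (\<forall>m<n. \<exists>y. eval f (m # xs) (Suc y))
      \<Longrightarrow> eval (Mu f) xs n"
monos list_all2_mono

fun fibval :: "nat list \<Rightarrow> nat" where
  "fibval [] = 0"
| "fibval (e # es) = e * fib (length es + 2) + fibval es"

text \<open>Valid Fibonacci representation (leading zeros allowed): binary, no two consecutive 1s.\<close>
definition fib_word :: "nat list \<Rightarrow> bool" where
  "fib_word w \<longleftrightarrow> (\<forall>e\<in>set w. e \<le> 1) \<and>
     (\<forall>i. Suc i < length w \<longrightarrow> \<not> (w ! i = 1 \<and> w ! Suc i = 1))"

text \<open>A DFA is (number of states Q, initial state, transition table, final states).
  States are 0..Q-1; the letter (a,b) in {0,1}^2 is coded as 2a+b in {0,..,3};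
  the transition from state q on letter c is the table entry at index 4q+c.\<close>
type_synonym dfa = "nat \<times> nat \<times> nat list \<times> nat list"

definition wf_dfa :: "dfa \<Rightarrow> bool" where
  "wf_dfa A = (case A of (Q, q0, d, F) \<Rightarrow>
     0 < Q \<and> q0 < Q \<and> length d = 4 * Q \<and> (\<forall>x\<in>set d. x < Q) \<and> (\<forall>x\<in>set F. x < Q))"

fun run :: "nat list \<Rightarrow> nat \<Rightarrow> nat list \<Rightarrow> nat" where
  "run d q [] = q"
| "run d q (c # w) = run d (d ! (4 * q + c)) w"

definition accepts :: "dfa \<Rightarrow> nat list \<Rightarrow> bool" where
  "accepts A w = (case A of (Q, q0, d, F) \<Rightarrow> run d q0 w \<in> set F)"

definition pair_word :: "nat list \<Rightarrow> nat list \<Rightarrow> nat list" where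
  "pair_word u v = map2 (\<lambda>a b. 2 * a + b) u v"

definition synchronized :: "dfa \<Rightarrow> (nat \<Rightarrow> nat) \<Rightarrow> bool" where
  "synchronized A s \<longleftrightarrow> wf_dfa A \<and>
     (\<forall>u v. length u = length v \<and> fib_word u \<and> fib_word v \<longrightarrow>
        (accepts A (pair_word u v) \<longleftrightarrow> fibval v = s (fibval u)))"

definition code_dfa :: "dfa \<Rightarrow> nat" where
  "code_dfa A = (case A of (Q, q0, d, F) \<Rightarrow>
     prod_encode (Q, prod_encode (q0, prod_encode (list_encode d, list_encode F))))"

definition first_occ :: "(nat \<Rightarrow> nat) \<Rightarrow> nat set" where
  "first_occ s = {m. \<forall>k<m. s k \<noteq> s m}"

text \<open>If s takes only finitely many values, its
  distinctness transform is finite and hence no infinite sequence s' equals it.\<close>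
definition is_distinctness_transform :: "(nat \<Rightarrow> nat) \<Rightarrow> (nat \<Rightarrow> nat) \<Rightarrow> bool" where
  "is_distinctness_transform s s' \<longleftrightarrow>
     infinite (first_occ s) \<and> (\<forall>n. s' n = s (enumerate (first_occ s) n))"

end

theory Submission
  imports Defs
begin

text \<open>That s' is the distinctness transform of s is a first-order sentence over (\<nat>, <) with the
  graphs of s and s' as atoms: s' is injective, has the same range as s, and lists the first
  occurrences of values of s in increasing order. For Fibonacci-synchronized s and s', every
  formula defines a set of Fibonacci-encoded tuples whose Myhill--Nerode index is bounded by a
  computable function of the numbers of states of the two automata: Boolean operations multiply
  the bound, projection exponentiates it (subset construction). Pumping then bounds the least
  witness of each existential quantifier, so the sentence is equivalent to one with bounded
  quantifiers, and its truth value is a primitive recursive function of the codes of the automata.\<close>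

section \<open>Primitive recursive expressions\<close>

datatype pexp =
    PVar nat
  | PConst nat
  | PAdd pexp pexp
  | PSub pexp pexp
  | PMul pexp pexp
  | PRec pexp pexp pexp

text \<open>Variables are de Bruijn indices into the environment; in PRec n z st the step st sees
  the counter t at index 0, the accumulator at index 1 and the outer environment shifted by 2.\<close>
fun peval :: "pexp \<Rightarrow> nat list \<Rightarrow> nat" where
  "peval (PVar i) env = (if i < length env then env ! i else 0)"
| "peval (PConst n) env = n"
| "peval (PAdd a b) env = peval a env + peval b env"
| "peval (PSub a b) env = peval a env - peval b env"
| "peval (PMul a b) env = peval a env * peval b env"
| "peval (PRec n z st) env =
     rec_nat (peval z env) (\<lambda>t acc. peval st (t # acc # env)) (peval n env)"

lemma eval_ProjI: "i < length xs \<Longrightarrow> y = xs ! i \<Longrightarrow> eval (Proj i) xs y"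
  by (auto intro: eval_Proj)

definition add_rf :: recf where "add_rf = PrimRec (Proj 0) (Comp Succ [Proj 1])"
definition mul_rf :: recf where "mul_rf = PrimRec Zero (Comp add_rf [Proj 1, Proj 2])"
definition pred_rf :: recf where "pred_rf = PrimRec Zero (Proj 0)"
definition sub_rf :: recf where "sub_rf = PrimRec (Proj 0) (Comp pred_rf [Proj 1])"

primrec const_rf :: "nat \<Rightarrow> recf" where
  "const_rf 0 = Zero"
| "const_rf (Suc n) = Comp Succ [const_rf n]"

lemma eval_add_rf: "eval add_rf [x, y] (x + y)"
proof (induction x)
  case 0
  then show ?case unfolding add_rf_def by (auto intro!: eval.intros eval_ProjI)
next
  case (Suc x)
  have "eval (Comp Succ [Proj 1]) [x, x + y, y] (Suc (x + y))"
    by (rule eval_Comp[where ys="[x + y]"]) (auto intro!: eval.intros eval_ProjI)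
  with Suc show ?case unfolding add_rf_def by (auto intro: eval_PrimRecS)
qed

lemma eval_mul_rf: "eval mul_rf [x, y] (x * y)"
proof (induction x)
  case 0
  then show ?case unfolding mul_rf_def by (auto intro!: eval.intros)
next
  case (Suc x)
  have "eval (Comp add_rf [Proj 1, Proj 2]) [x, x * y, y] (x * y + y)"
    by (rule eval_Comp[where ys="[x * y, y]"]) (auto intro!: eval.intros eval_add_rf eval_ProjI)
  with Suc show ?case unfolding mul_rf_def by (auto intro: eval_PrimRecS simp: add.commute)
qed

lemma eval_pred_rf: "eval pred_rf [x] (x - 1)"
  by (induction x) (auto simp: pred_rf_def intro!: eval.intros eval_ProjI)

lemma eval_sub_rf: "eval sub_rf [y, x] (x - y)"
proof (induction y)
  case 0
  then show ?case unfolding sub_rf_def by (auto intro!: eval.intros eval_ProjI)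
next
  case (Suc y)
  have "eval (Comp pred_rf [Proj 1]) [y, x - y, x] (x - y - 1)"
    by (rule eval_Comp[where ys="[x - y]"])
       (use eval_pred_rf[of "x - y"] in \<open>auto intro: eval_ProjI\<close>)
  then have "eval (Comp pred_rf [Proj 1]) [y, x - y, x] (x - Suc y)"
    by simp
  with Suc show ?case unfolding sub_rf_def by (auto intro: eval_PrimRecS)
qed

lemma eval_const_rf: "eval (const_rf n) xs n"
  by (induction n) (auto intro!: eval_Comp[where ys="[n]" for n] eval.intros)

fun compile :: "nat \<Rightarrow> pexp \<Rightarrow> recf" where
  "compile k (PVar i) = (if i < k then Proj i else Zero)"
| "compile k (PConst n) = const_rf n"
| "compile k (PAdd a b) = Comp add_rf [compile k a, compile k b]"
| "compile k (PSub a b) = Comp sub_rf [compile k b, compile k a]"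
| "compile k (PMul a b) = Comp mul_rf [compile k a, compile k b]"
| "compile k (PRec n z st) =
     Comp (PrimRec (compile k z) (compile (k + 2) st)) (compile k n # map Proj [0..<k])"

lemma eval_Projs: "list_all2 (\<lambda>g y. eval g xs y) (map Proj [0..<length xs]) xs"
  by (auto simp: list_all2_conv_all_nth intro: eval_Proj)

lemma eval_compile: "length env = k \<Longrightarrow> eval (compile k e) env (peval e env)"
proof (induction k e arbitrary: env rule: compile.induct)
  case (1 k i)
  then show ?case by (auto intro: eval.intros)
next
  case (2 k n)
  then show ?case by (auto intro: eval_const_rf)
next
  case (3 k a b)
  then show ?case by (auto intro!: eval_Comp[where ys="[peval a env, peval b env]"] eval_add_rf)
next
  case (4 k a b)
  then show ?case by (auto intro!: eval_Comp[where ys="[peval b env, peval a env]"] eval_sub_rf)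
next
  case (5 k a b)
  then show ?case by (auto intro!: eval_Comp[where ys="[peval a env, peval b env]"] eval_mul_rf)
next
  case (6 k n z st)
  have "eval (PrimRec (compile k z) (compile (k + 2) st)) (t # env)
      (rec_nat (peval z env) (\<lambda>t acc. peval st (t # acc # env)) t)" for t
    using 6 by (induction t) (auto intro: eval_PrimRec0 eval_PrimRecS)
  then show ?case
    by (auto intro!: eval_Comp[where ys="peval n env # env"] simp: 6 eval_Projs[of env, simplified 6])
qed

fun shift :: "nat \<Rightarrow> nat \<Rightarrow> pexp \<Rightarrow> pexp" where
  "shift c d (PVar i) = (if i < c then PVar i else PVar (i + d))"
| "shift c d (PConst n) = PConst n"
| "shift c d (PAdd a b) = PAdd (shift c d a) (shift c d b)"
| "shift c d (PSub a b) = PSub (shift c d a) (shift c d b)"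
| "shift c d (PMul a b) = PMul (shift c d a) (shift c d b)"
| "shift c d (PRec n z st) = PRec (shift c d n) (shift c d z) (shift (c + 2) d st)"

lemma peval_shift:
  "length pre = c \<Longrightarrow> length xs = d \<Longrightarrow>
   peval (shift c d e) (pre @ xs @ env) = peval e (pre @ env)"
proof (induction c d e arbitrary: pre rule: shift.induct)
  case (1 c d i)
  then show ?case by (auto simp: nth_append)
next
  case (6 c d n z st)
  have "peval (shift (c + 2) d st) (t # a # pre @ xs @ env) = peval st (t # a # pre @ env)" for t a
    using "6.IH"(3)[of "t # a # pre"] "6.prems" by simp
  with 6 show ?case by simp
qed simp_all

definition lift1 :: "pexp \<Rightarrow> pexp" where "lift1 = shift 0 1"
definition lift2 :: "pexp \<Rightarrow> pexp" where "lift2 = shift 0 2"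
definition lift_past1 :: "pexp \<Rightarrow> pexp" where "lift_past1 = shift 1 1"

lemma peval_lift1 [simp]: "peval (lift1 e) (x # env) = peval e env"
  using peval_shift[of "[]" 0 "[x]" 1 e env] by (simp add: lift1_def)

lemma peval_lift2 [simp]: "peval (lift2 e) (x # y # env) = peval e env"
  using peval_shift[of "[]" 0 "[x, y]" 2 e env] by (simp add: lift2_def)

lemma peval_lift_past1 [simp]: "peval (lift_past1 e) (x # y # env) = peval e (x # env)"
  using peval_shift[of "[x]" 1 "[y]" 1 e env] by (simp add: lift_past1_def)

definition p_sgn :: "pexp \<Rightarrow> pexp" where "p_sgn e = PSub (PConst 1) (PSub (PConst 1) e)"
definition p_not :: "pexp \<Rightarrow> pexp" where "p_not e = PSub (PConst 1) e"
definition p_le :: "pexp \<Rightarrow> pexp \<Rightarrow> pexp" where "p_le a b = p_not (PSub a b)"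
definition p_eq :: "pexp \<Rightarrow> pexp \<Rightarrow> pexp" where "p_eq a b = PMul (p_le a b) (p_le b a)"
definition p_if :: "pexp \<Rightarrow> pexp \<Rightarrow> pexp \<Rightarrow> pexp" where
  "p_if c a b = PAdd (PMul (p_sgn c) a) (PMul (p_not c) b)"

lemma peval_p_sgn [simp]: "peval (p_sgn e) env = (if peval e env = 0 then 0 else 1)"
  by (simp add: p_sgn_def)

lemma peval_p_not [simp]: "peval (p_not e) env = (if peval e env = 0 then 1 else 0)"
  by (simp add: p_not_def)

lemma peval_p_le [simp]: "peval (p_le a b) env = (if peval a env \<le> peval b env then 1 else 0)"
  by (simp add: p_le_def)

lemma peval_p_eq [simp]: "peval (p_eq a b) env = (if peval a env = peval b env then 1 else 0)"
  by (simp add: p_eq_def)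

lemma peval_p_if [simp]:
  "peval (p_if c a b) env = (if peval c env \<noteq> 0 then peval a env else peval b env)"
  by (simp add: p_if_def)

definition p_sum :: "pexp \<Rightarrow> pexp \<Rightarrow> pexp" where
  "p_sum n f = PRec n (PConst 0) (PAdd (PVar 1) (lift_past1 f))"

lemma peval_p_sum [simp]: "peval (p_sum n f) env = (\<Sum>i<peval n env. peval f (i # env))"
proof -
  have "rec_nat 0 (\<lambda>t acc. peval (PAdd (PVar 1) (lift_past1 f)) (t # acc # env)) m =
      (\<Sum>i<m. peval f (i # env))" for m
    by (induction m) auto
  then show ?thesis by (simp add: p_sum_def)
qed

definition p_bex :: "pexp \<Rightarrow> pexp \<Rightarrow> pexp" where "p_bex n f = p_sgn (p_sum n f)"

lemma peval_p_bex [simp]: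
  "peval (p_bex n f) env = (if \<exists>i<peval n env. peval f (i # env) \<noteq> 0 then 1 else 0)"
  by (simp add: p_bex_def)

definition p_the :: "pexp \<Rightarrow> pexp \<Rightarrow> pexp" where
  "p_the n f = p_sum (PAdd n (PConst 1)) (PMul (PVar 0) (p_sgn f))"

lemma peval_p_the:
  assumes "a \<le> peval n env" and "\<And>m. m \<le> peval n env \<Longrightarrow> peval f (m # env) \<noteq> 0 \<longleftrightarrow> m = a"
  shows "peval (p_the n f) env = a"
proof -
  have "peval (p_the n f) env =
      (\<Sum>m<peval n env + 1. m * (if peval f (m # env) = 0 then 0 else 1))"
    by (simp add: p_the_def)
  also have "\<dots> = (\<Sum>m<peval n env + 1. if m = a then m else 0)"
  proof (rule sum.cong)
    fix m assume "m \<in> {..<peval n env + 1}"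
    then have "peval f (m # env) \<noteq> 0 \<longleftrightarrow> m = a" using assms(2) by simp
    then show "m * (if peval f (m # env) = 0 then 0 else 1) = (if m = a then m else 0)" by auto
  qed simp
  also have "\<dots> = a"
    using assms(1) by (subst sum.delta) auto
  finally show ?thesis .
qed

definition p_pair :: "pexp \<Rightarrow> pexp \<Rightarrow> pexp" where
  "p_pair a b = PAdd (p_sum (PAdd (PAdd a b) (PConst 1)) (PVar 0)) a"

lemma peval_p_pair [simp]: "peval (p_pair a b) env = prod_encode (peval a env, peval b env)"
proof -
  have "(\<Sum>i<Suc m. i) = triangle m" for m
    by (induction m) auto
  then show ?thesis by (simp add: p_pair_def prod_encode_def)
qed

definition p_fst :: "pexp \<Rightarrow> pexp" where
  "p_fst z = p_the z (p_bex (PAdd (lift1 z) (PConst 1)) (p_eq (p_pair (PVar 1) (PVar 0)) (lift2 z)))"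

definition p_snd :: "pexp \<Rightarrow> pexp" where
  "p_snd z = p_the z (p_bex (PAdd (lift1 z) (PConst 1)) (p_eq (p_pair (PVar 0) (PVar 1)) (lift2 z)))"

lemma prod_decode_le:
  assumes "prod_decode x = (a, b)"
  shows "a \<le> x" and "b \<le> x" and "prod_encode (a, b) = x"
proof -
  show e: "prod_encode (a, b) = x" using assms by (metis prod_decode_inverse)
  show "a \<le> x" "b \<le> x" using le_prod_encode_1[of a b] le_prod_encode_2[of b a] e by auto
qed

lemma peval_p_fst [simp]: "peval (p_fst z) env = fst (prod_decode (peval z env))"
proof -
  obtain a b where ab: "prod_decode (peval z env) = (a, b)" by fastforce
  note decode = prod_decode_le[OF ab]
  have "(\<exists>n<Suc (peval z env). prod_encode (m, n) = peval z env) \<longleftrightarrow> m = a" for m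
    using decode by (metis Pair_inject le_imp_less_Suc prod_encode_eq)
  then have "peval (p_fst z) env = a"
    unfolding p_fst_def using decode by (intro peval_p_the) auto
  then show ?thesis by (simp add: ab)
qed

lemma peval_p_snd [simp]: "peval (p_snd z) env = snd (prod_decode (peval z env))"
proof -
  obtain a b where ab: "prod_decode (peval z env) = (a, b)" by fastforce
  note decode = prod_decode_le[OF ab]
  have "(\<exists>n<Suc (peval z env). prod_encode (n, m) = peval z env) \<longleftrightarrow> m = b" for m
    using decode by (metis Pair_inject le_imp_less_Suc prod_encode_eq)
  then have "peval (p_snd z) env = b"
    unfolding p_snd_def using decode by (intro peval_p_the) auto
  then show ?thesis by (simp add: ab)
qed

definition p_fib :: "pexp \<Rightarrow> pexp" where
  "p_fib n = p_fst (PRec n (p_pair (PConst 0) (PConst 1))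
     (p_pair (p_snd (PVar 1)) (PAdd (p_fst (PVar 1)) (p_snd (PVar 1)))))"

lemma peval_p_fib [simp]: "peval (p_fib n) env = fib (peval n env)"
proof -
  have "rec_nat (prod_encode (0, 1))
      (\<lambda>t acc. peval (p_pair (p_snd (PVar 1)) (PAdd (p_fst (PVar 1)) (p_snd (PVar 1)))) (t # acc # env)) m
     = prod_encode (fib m, fib (Suc m))" for m
    by (induction m) auto
  then show ?thesis by (simp add: p_fib_def)
qed

definition p_pow2 :: "pexp \<Rightarrow> pexp" where "p_pow2 e = PRec e (PConst 1) (PMul (PVar 1) (PConst 2))"

lemma peval_p_pow2 [simp]: "peval (p_pow2 e) env = 2 ^ peval e env"
proof -
  have "rec_nat 1 (\<lambda>t acc. peval (PMul (PVar 1) (PConst 2)) (t # acc # env)) m = 2 ^ m" for m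
    by (induction m) auto
  then show ?thesis by (simp add: p_pow2_def)
qed

definition list_code_tl :: "nat \<Rightarrow> nat" where "list_code_tl c = snd (prod_decode (c - 1))"
definition list_code_hd :: "nat \<Rightarrow> nat" where "list_code_hd c = fst (prod_decode (c - 1))"
definition list_code_nth :: "nat \<Rightarrow> nat \<Rightarrow> nat" where
  "list_code_nth i c = list_code_hd ((list_code_tl ^^ i) c)"
definition list_code_member :: "nat \<Rightarrow> nat \<Rightarrow> bool" where
  "list_code_member q c \<longleftrightarrow> (\<exists>i<c + 1. (list_code_tl ^^ i) c \<noteq> 0 \<and> list_code_nth i c = q)"

lemma list_code_tl_list_encode: "list_code_tl (list_encode xs) = list_encode (tl xs)"
proof (cases xs)
  case Nil
  then show ?thesis by (simp add: list_code_tl_def prod_decode_def prod_decode_aux.simps[of 0 0])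
qed (simp add: list_code_tl_def)

lemma funpow_list_code_tl: "(list_code_tl ^^ i) (list_encode xs) = list_encode (drop i xs)"
  by (induction i) (auto simp: list_code_tl_list_encode drop_Suc tl_drop)

lemma list_code_nth_list_encode: "i < length xs \<Longrightarrow> list_code_nth i (list_encode xs) = xs ! i"
  by (cases "drop i xs")
     (auto simp: list_code_nth_def list_code_hd_def funpow_list_code_tl dest!: nth_via_drop)

lemma length_le_list_encode: "length xs \<le> list_encode xs"
proof (induction xs)
  case (Cons x xs)
  then show ?case using le_prod_encode_2[of "list_encode xs" x] by simp
qed simp

lemma list_encode_eq_0_iff: "list_encode xs = 0 \<longleftrightarrow> xs = []"
  by (cases xs) auto

lemma list_code_member_list_encode: "list_code_member q (list_encode xs) \<longleftrightarrow> q \<in> set xs"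
proof -
  have nonempty: "(list_code_tl ^^ i) (list_encode xs) \<noteq> 0 \<longleftrightarrow> i < length xs" for i
    by (simp add: funpow_list_code_tl list_encode_eq_0_iff not_le)
  have "list_code_member q (list_encode xs) \<longleftrightarrow>
      (\<exists>i<list_encode xs + 1. i < length xs \<and> list_code_nth i (list_encode xs) = q)"
    unfolding list_code_member_def nonempty ..
  also have "\<dots> \<longleftrightarrow> (\<exists>i<length xs. xs ! i = q)"
  proof -
    have "i < length xs \<Longrightarrow> i < list_encode xs + 1" for i
      using length_le_list_encode[of xs] by linarith
    then show ?thesis by (metis list_code_nth_list_encode)
  qed
  finally show ?thesis by (auto simp: in_set_conv_nth)
qed

definition p_tl :: "pexp \<Rightarrow> pexp" where "p_tl e = p_snd (PSub e (PConst 1))"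
definition p_hd :: "pexp \<Rightarrow> pexp" where "p_hd e = p_fst (PSub e (PConst 1))"
definition p_drop :: "pexp \<Rightarrow> pexp \<Rightarrow> pexp" where "p_drop i c = PRec i c (p_tl (PVar 1))"
definition p_nth :: "pexp \<Rightarrow> pexp \<Rightarrow> pexp" where "p_nth i c = p_hd (p_drop i c)"
definition p_member :: "pexp \<Rightarrow> pexp \<Rightarrow> pexp" where
  "p_member q c = p_bex (PAdd c (PConst 1))
     (PMul (p_sgn (p_drop (PVar 0) (lift1 c))) (p_eq (p_nth (PVar 0) (lift1 c)) (lift1 q)))"

lemma peval_p_tl [simp]: "peval (p_tl e) env = list_code_tl (peval e env)"
  by (simp add: p_tl_def list_code_tl_def)

lemma peval_p_hd [simp]: "peval (p_hd e) env = list_code_hd (peval e env)"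
  by (simp add: p_hd_def list_code_hd_def)

lemma peval_p_drop [simp]: "peval (p_drop i c) env = (list_code_tl ^^ peval i env) (peval c env)"
proof -
  have "rec_nat x (\<lambda>t acc. peval (p_tl (PVar 1)) (t # acc # env)) m = (list_code_tl ^^ m) x" for m x
    by (induction m) auto
  then show ?thesis by (simp add: p_drop_def)
qed

lemma peval_p_nth [simp]: "peval (p_nth i c) env = list_code_nth (peval i env) (peval c env)"
  by (simp add: p_nth_def list_code_nth_def)

lemma peval_p_member [simp]:
  "peval (p_member q c) env = (if list_code_member (peval q env) (peval c env) then 1 else 0)"
  by (auto simp: p_member_def list_code_member_def)

section \<open>Fibonacci representations\<close>

lemma fib_word_Nil [simp]: "fib_word []"
  by (simp add: fib_word_def)

lemma fib_word_Cons:
  "fib_word (x # w) \<longleftrightarrow> x \<le> 1 \<and> fib_word w \<and> \<not> (x = 1 \<and> w \<noteq> [] \<and> hd w = 1)"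
proof
  assume xw: "fib_word (x # w)"
  have "fib_word w"
    unfolding fib_word_def
  proof (intro conjI allI impI)
    show "\<forall>e\<in>set w. e \<le> 1" using xw by (simp add: fib_word_def)
    show "\<not> (w ! i = 1 \<and> w ! Suc i = 1)" if "Suc i < length w" for i
      using xw that unfolding fib_word_def by (metis Suc_less_eq length_Cons nth_Cons_Suc)
  qed
  moreover have "\<not> (x = 1 \<and> w \<noteq> [] \<and> hd w = 1)"
    using xw unfolding fib_word_def by (cases w) auto
  ultimately show "x \<le> 1 \<and> fib_word w \<and> \<not> (x = 1 \<and> w \<noteq> [] \<and> hd w = 1)"
    using xw by (simp add: fib_word_def)
next
  assume "x \<le> 1 \<and> fib_word w \<and> \<not> (x = 1 \<and> w \<noteq> [] \<and> hd w = 1)"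
  then show "fib_word (x # w)"
    unfolding fib_word_def by (auto simp: hd_conv_nth nth_Cons split: nat.splits)
qed

lemma fib_word_append:
  "fib_word (a @ b) \<longleftrightarrow>
     fib_word a \<and> fib_word b \<and> \<not> (a \<noteq> [] \<and> b \<noteq> [] \<and> last a = 1 \<and> hd b = 1)"
  by (induction a) (auto simp: fib_word_Cons)

lemma fibval_less_fib: "fib_word w \<Longrightarrow> fibval w < fib (length w + 2)"
proof (induction w rule: induct_list012)
  case (3 x y w)
  have y: "fib_word (y # w)" and w: "fib_word w" and "x \<le> 1"
    using "3.prems" by (auto simp: fib_word_Cons)
  show ?case
  proof (cases "x = 0")
    case True
    have "fib (length w + 3) \<le> fib (length w + 4)" by (rule fib_mono) simp
    with True "3.IH"(2)[OF y] show ?thesis by (simp add: numeral_eq_Suc)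
  next
    case False
    then have "x = 1" "y = 0" using \<open>x \<le> 1\<close> "3.prems" by (auto simp: fib_word_Cons)
    with "3.IH"(1)[OF w] show ?thesis by (simp add: numeral_eq_Suc)
  qed
qed (auto simp: fib_word_Cons numeral_eq_Suc)

lemma fibval_append_less_iff:
  assumes "length a1 = length a2" "length b1 = length b2"
    and "fib_word (a1 @ b1)" "fib_word (a2 @ b2)"
  shows "fibval (a1 @ b1) < fibval (a2 @ b2) \<longleftrightarrow>
    fibval a1 < fibval a2 \<or> (a1 = a2 \<and> fibval b1 < fibval b2)"
  using assms
proof (induction a1 a2 rule: list_induct2)
  case (Cons x a1 y a2)
  have x: "x \<le> 1" "fib_word (a1 @ b1)" and y: "y \<le> 1" "fib_word (a2 @ b2)"
    using Cons.prems by (auto simp: fib_word_Cons)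
  have "fib_word a1" "fib_word a2" using x y by (auto simp: fib_word_append)
  then have bounds: "fibval (a1 @ b1) < fib (length (a1 @ b1) + 2)" "fibval a1 < fib (length a1 + 2)"
    "fibval (a2 @ b2) < fib (length (a2 @ b2) + 2)" "fibval a2 < fib (length a2 + 2)"
    using x y fibval_less_fib by blast+
  show ?case
  proof (cases "x = y")
    case True
    then show ?thesis using Cons x y by auto
  next
    case False
    then have "x = 0 \<and> y = 1 \<or> x = 1 \<and> y = 0" using x y by auto
    then show ?thesis using bounds Cons.hyps Cons.prems(1) by auto
  qed
qed simp

lemma fibval_eq_iff:
  "length a1 = length a2 \<Longrightarrow> fib_word a1 \<Longrightarrow> fib_word a2 \<Longrightarrow> fibval a1 = fibval a2 \<longleftrightarrow> a1 = a2"
proof (induction a1 a2 rule: list_induct2)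
  case (Cons x a1 y a2)
  have x: "x \<le> 1" "fib_word a1" and y: "y \<le> 1" "fib_word a2"
    using Cons.prems by (auto simp: fib_word_Cons)
  show ?case
  proof (cases "x = y")
    case False
    then have "x = 0 \<and> y = 1 \<or> x = 1 \<and> y = 0" using x y by auto
    moreover have "fibval a1 < fib (length a1 + 2)" "fibval a2 < fib (length a2 + 2)"
      using fibval_less_fib x y by auto
    ultimately show ?thesis using Cons.hyps by auto
  qed (use Cons x y in auto)
qed simp

lemma fibval_replicate_0_append [simp]: "fibval (replicate j 0 @ w) = fibval w"
  by (induction j) auto

lemma less_fib_add_2: "n < fib (n + 2)"
proof (induction n)
  case (Suc n)
  have "fib (Suc n + 2) = fib (n + 2) + fib (n + 1)" by (simp add: numeral_eq_Suc)
  moreover have "fib (n + 1) > 0" by (simp add: fib_neq_0_nat)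
  ultimately show ?case using Suc by simp
qed simp

fun zeck :: "nat \<Rightarrow> nat \<Rightarrow> nat list" where
  "zeck 0 n = []"
| "zeck (Suc L) n = (if fib (L + 2) \<le> n then 1 # zeck L (n - fib (L + 2)) else 0 # zeck L n)"

lemma length_zeck [simp]: "length (zeck L n) = L"
  by (induction L arbitrary: n) auto

lemma zeck_correct:
  "n < fib (L + 2) \<Longrightarrow> fib_word (zeck L n) \<and> fibval (zeck L n) = n \<and>
    (zeck L n \<noteq> [] \<and> hd (zeck L n) = 1 \<longrightarrow> fib (L + 1) \<le> n)"
proof (induction L arbitrary: n)
  case (Suc L)
  show ?case
  proof (cases "fib (L + 2) \<le> n")
    case True
    have "n - fib (L + 2) < fib (L + 1)" using Suc.prems True by (simp add: numeral_eq_Suc)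
    moreover have "fib (L + 1) \<le> fib (L + 2)" by (rule fib_mono) simp
    ultimately show ?thesis using Suc.IH[of "n - fib (L + 2)"] True by (auto simp: fib_word_Cons)
  next
    case False
    then show ?thesis using Suc.IH[of n] by (auto simp: fib_word_Cons)
  qed
qed simp

lemma zeck_fibval: "n < fib (L + 2) \<Longrightarrow> fibval (zeck L n) = n"
  and fib_word_zeck: "n < fib (L + 2) \<Longrightarrow> fib_word (zeck L n)"
  using zeck_correct by blast+

section \<open>Multi-track words and their index\<close>

text \<open>A word over {0,1}^k is a list of columns of length k; its i-th row is track i.\<close>
type_synonym mword = "nat list list"

definition track :: "nat \<Rightarrow> mword \<Rightarrow> nat list" where
  "track i w = map (\<lambda>l. l ! i) w"

definition fib_tracks :: "nat \<Rightarrow> mword \<Rightarrow> bool" where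
  "fib_tracks k w \<longleftrightarrow> (\<forall>l\<in>set w. length l = k) \<and> (\<forall>i<k. fib_word (track i w))"

definition track_vals :: "nat \<Rightarrow> mword \<Rightarrow> nat list" where
  "track_vals k w = map (\<lambda>i. fibval (track i w)) [0..<k]"

definition Fib_tracks :: "nat \<Rightarrow> mword set" where
  "Fib_tracks k = {w. fib_tracks k w}"

definition residual :: "mword set \<Rightarrow> mword \<Rightarrow> mword set" where
  "residual L u = {w. u @ w \<in> L}"

text \<open>The card of residuals k L is the Myhill--Nerode index of L with only prefixes whose tracks
  are Fibonacci words taken into account.\<close>
definition residuals :: "nat \<Rightarrow> mword set \<Rightarrow> mword set set" where
  "residuals k L = residual L ` Fib_tracks k"

definition residuals_le :: "nat \<Rightarrow> mword set \<Rightarrow> nat \<Rightarrow> bool" where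
  "residuals_le k L N \<longleftrightarrow> finite (residuals k L) \<and> card (residuals k L) \<le> N"

definition Letters :: "nat \<Rightarrow> nat list set" where
  "Letters k = {l. set l \<subseteq> {0, 1} \<and> length l = k}"

lemma track_append [simp]: "track i (u @ w) = track i u @ track i w"
  and length_track [simp]: "length (track i w) = length w"
  by (simp_all add: track_def)

lemma nth_track_vals [simp]: "i < k \<Longrightarrow> track_vals k w ! i = fibval (track i w)"
  by (simp_all add: track_vals_def)

lemma fib_tracks_append:
  "fib_tracks k (u @ w) \<longleftrightarrow> fib_tracks k u \<and> fib_tracks k w \<and>
     (\<forall>i<k. \<not> (u \<noteq> [] \<and> w \<noteq> [] \<and> last u ! i = 1 \<and> hd w ! i = 1))"
  unfolding fib_tracks_def by (auto simp: fib_word_append track_def last_map hd_map)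

lemma fib_tracks_take: "fib_tracks k v \<Longrightarrow> fib_tracks k (take i v)"
  and fib_tracks_drop: "fib_tracks k v \<Longrightarrow> fib_tracks k (drop i v)"
  using fib_tracks_append[of k "take i v" "drop i v"] by simp_all

lemma fib_tracks_digit: "fib_tracks k u \<Longrightarrow> l \<in> set u \<Longrightarrow> i < k \<Longrightarrow> l ! i \<le> 1"
  unfolding fib_tracks_def track_def by (auto simp: fib_word_def)

lemma last_in_Letters:
  assumes "fib_tracks k u" and "u \<noteq> []"
  shows "last u \<in> Letters k"
proof -
  have last: "last u \<in> set u" using assms(2) by simp
  then have length: "length (last u) = k" using assms(1) by (simp add: fib_tracks_def)
  have "e \<in> {0, 1}" if e: "e \<in> set (last u)" for e
  proof -
    obtain i where "i < k" "last u ! i = e" using e length by (auto simp: in_set_conv_nth)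
    then have "e \<le> 1" using fib_tracks_digit[OF assms(1) last] by blast
    then show ?thesis by auto
  qed
  with length show ?thesis by (auto simp: Letters_def)
qed

lemma fib_tracks_singleton: "l \<in> Letters k \<Longrightarrow> fib_tracks k [l]"
  unfolding fib_tracks_def Letters_def track_def by (fastforce simp: fib_word_Cons dest: nth_mem)

lemma residual_Fib_tracks:
  "fib_tracks k u \<Longrightarrow> u \<noteq> [] \<Longrightarrow> residual (Fib_tracks k) u = residual (Fib_tracks k) [last u]"
  using fib_tracks_singleton[OF last_in_Letters] fib_tracks_append[of k u] fib_tracks_append[of k "[last u]"]
  by (auto simp: residual_def Fib_tracks_def)

lemma residual_in_residuals: "fib_tracks k u \<Longrightarrow> residual L u \<in> residuals k L"
  by (simp add: residuals_def Fib_tracks_def)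

lemma residuals_le_mono: "residuals_le k L N \<Longrightarrow> N \<le> M \<Longrightarrow> residuals_le k L M"
  by (simp add: residuals_le_def)

lemma residuals_le_card:
  assumes "\<And>u. fib_tracks k u \<Longrightarrow> residual L u = g (st u) \<and> st u \<in> B" and "finite B"
  shows "residuals_le k L (card B)"
proof -
  have "residuals k L \<subseteq> g ` B"
    unfolding residuals_def Fib_tracks_def using assms(1) by auto
  then have "finite (residuals k L)" "card (residuals k L) \<le> card (g ` B)"
    using assms(2) by (auto intro: finite_subset card_mono)
  moreover have "card (g ` B) \<le> card B" using assms(2) by (rule card_image_le)
  ultimately show ?thesis unfolding residuals_le_def by simp
qed

lemma residuals_le_Fib_tracks: "residuals_le k (Fib_tracks k) (2 ^ k + 1)"
proof -
  let ?st = "\<lambda>u::mword. if u = [] then None else Some (last u)"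
  let ?g = "\<lambda>x. case x of None \<Rightarrow> residual (Fib_tracks k) [] | Some l \<Rightarrow> residual (Fib_tracks k) [l]"
  have fin: "finite (Letters k)"
    unfolding Letters_def by (rule finite_lists_length_eq) simp
  have "residuals_le k (Fib_tracks k) (card (insert None (Some ` Letters k)))"
    by (rule residuals_le_card[where g = ?g and st = ?st])
       (auto simp: residual_Fib_tracks last_in_Letters fin)
  moreover have "card (Letters k) = 2 ^ k"
    unfolding Letters_def by (subst card_lists_length_eq) (auto simp: numeral_2_eq_2)
  ultimately show ?thesis by (simp add: card_image fin)
qed

lemma residuals_le_combine:
  assumes "residuals_le k L1 N1" and "residuals_le k L2 N2"
    and "\<And>u. residual L u = g (residual L1 u) (residual L2 u)"
  shows "residuals_le k L (N1 * N2)"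
proof -
  have "residuals_le k L (card (residuals k L1 \<times> residuals k L2))"
    by (rule residuals_le_card[where g = "case_prod g" and st = "\<lambda>u. (residual L1 u, residual L2 u)"])
       (use assms in \<open>auto simp: residual_in_residuals residuals_le_def\<close>)
  moreover have "card (residuals k L1 \<times> residuals k L2) \<le> N1 * N2"
    using assms(1,2) by (simp add: card_cartesian_product residuals_le_def mult_le_mono)
  ultimately show ?thesis by (rule residuals_le_mono)
qed

lemma residuals_le_Diff:
  "residuals_le k L1 N1 \<Longrightarrow> residuals_le k L2 N2 \<Longrightarrow> residuals_le k (L1 - L2) (N1 * N2)"
  by (rule residuals_le_combine[where g = "(-)"]) (auto simp: residual_def)

lemma residuals_le_Int:
  "residuals_le k L1 N1 \<Longrightarrow> residuals_le k L2 N2 \<Longrightarrow> residuals_le k (L1 \<inter> L2) (N1 * N2)"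
  by (rule residuals_le_combine[where g = "(\<inter>)"]) (auto simp: residual_def)

definition zeros :: "nat \<Rightarrow> nat \<Rightarrow> mword" where
  "zeros k j = replicate j (replicate k 0)"

lemma length_zeros [simp]: "length (zeros k j) = j"
  and track_zeros [simp]: "i < k \<Longrightarrow> track i (zeros k j) = replicate j 0"
  by (simp_all add: zeros_def track_def)

lemma fib_tracks_zeros_append [simp]: "fib_tracks k (zeros k j @ w) \<longleftrightarrow> fib_tracks k w"
proof -
  have "fib_tracks k (zeros k j)" by (auto simp: fib_tracks_def zeros_def track_def fib_word_def)
  moreover have "i < k \<Longrightarrow> zeros k j \<noteq> [] \<Longrightarrow> last (zeros k j) ! i = 0" for i
    by (simp add: zeros_def)
  ultimately show ?thesis by (auto simp: fib_tracks_append)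
qed

lemma track_vals_zeros_append [simp]: "track_vals k (zeros k j @ w) = track_vals k w"
  by (simp add: track_vals_def)

lemma track_map_tl: "fib_tracks (Suc k) v \<Longrightarrow> i < k \<Longrightarrow> track i (map tl v) = track (Suc i) v"
  unfolding track_def fib_tracks_def by (auto simp: nth_tl)

lemma fib_tracks_map_tl: "fib_tracks (Suc k) v \<Longrightarrow> fib_tracks k (map tl v)"
  using track_map_tl[of k v] unfolding fib_tracks_def by auto

lemma track_vals_Suc:
  assumes "fib_tracks (Suc k) v"
  shows "track_vals (Suc k) v = fibval (track 0 v) # track_vals k (map tl v)"
proof -
  have "track_vals (Suc k) v = map (\<lambda>i. fibval (track i v)) (0 # map Suc [0..<k])"
    unfolding track_vals_def by (simp add: upt_conv_Cons map_Suc_upt del: upt_Suc)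
  then show ?thesis
    unfolding track_vals_def using track_map_tl[OF assms] by simp
qed

text \<open>Projection deleting the first track. This may leave leading columns that are zero in all
  remaining tracks, so such zero padding is removed as well.\<close>
definition project :: "nat \<Rightarrow> mword set \<Rightarrow> mword set" where
  "project k L = {w. fib_tracks k w \<and> (\<exists>j v. v \<in> L \<and> map tl v = zeros k j @ w)}"

lemma residual_project:
  assumes L: "L \<subseteq> Fib_tracks (Suc k)" and u: "fib_tracks k u"
  shows "residual (project k L) u =
    {w. \<exists>q\<in>{residual L v1 | v1 j. fib_tracks (Suc k) v1 \<and> map tl v1 = zeros k j @ u}.
        \<exists>v2\<in>q. map tl v2 = w}"
    (is "_ = ?R")
proof
  show "residual (project k L) u \<subseteq> ?R"
  proof
    fix w assume "w \<in> residual (project k L) u"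
    then obtain j v where v: "v \<in> L" "map tl v = zeros k j @ u @ w"
      unfolding residual_def project_def by auto
    let ?v1 = "take (j + length u) v" and ?v2 = "drop (j + length u) v"
    have "map tl ?v1 = zeros k j @ u" "map tl ?v2 = w"
      using v(2) by (simp_all flip: take_map drop_map)
    moreover have "fib_tracks (Suc k) ?v1"
      using v L by (auto simp: Fib_tracks_def fib_tracks_take)
    moreover have "?v2 \<in> residual L ?v1" using v by (simp add: residual_def)
    ultimately show "w \<in> ?R" by blast
  qed
next
  show "?R \<subseteq> residual (project k L) u"
  proof
    fix w assume "w \<in> ?R"
    then obtain v1 j v2 where v: "map tl v1 = zeros k j @ u" "v1 @ v2 \<in> L" "map tl v2 = w"
      unfolding residual_def by blast
    then have tl: "map tl (v1 @ v2) = zeros k j @ (u @ w)" by simp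
    moreover have "fib_tracks k (map tl (v1 @ v2))"
      using v(2) L by (intro fib_tracks_map_tl) (auto simp: Fib_tracks_def)
    ultimately have "fib_tracks k (u @ w)" by simp
    with v(2) tl show "w \<in> residual (project k L) u"
      unfolding residual_def project_def by blast
  qed
qed

text \<open>Subset construction: the residual of the projection is determined by a set of residuals of L.\<close>
lemma residuals_le_project:
  assumes "L \<subseteq> Fib_tracks (Suc k)" and "residuals_le (Suc k) L N"
  shows "residuals_le k (project k L) (2 ^ N)"
proof -
  let ?st = "\<lambda>u. {residual L v1 | v1 j. fib_tracks (Suc k) v1 \<and> map tl v1 = zeros k j @ u}"
  let ?g = "\<lambda>S. {w. \<exists>q\<in>S. \<exists>v2\<in>q. map tl v2 = w}"
  have "residuals_le k (project k L) (card (Pow (residuals (Suc k) L)))"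
    by (rule residuals_le_card[where g = ?g and st = ?st])
       (use assms in \<open>auto simp: residual_project residual_in_residuals residuals_le_def\<close>)
  moreover have "card (Pow (residuals (Suc k) L)) \<le> 2 ^ N"
    using assms(2) by (simp add: residuals_le_def card_Pow power_increasing)
  ultimately show ?thesis by (rule residuals_le_mono)
qed

definition cons_track :: "nat list \<Rightarrow> mword \<Rightarrow> mword" where
  "cons_track xs ws = map2 (#) xs ws"

lemma cons_track:
  assumes "length xs = length ws" "fib_word xs" "fib_tracks k ws"
  shows "fib_tracks (Suc k) (cons_track xs ws)" and "map tl (cons_track xs ws) = ws"
    and "track 0 (cons_track xs ws) = xs"
proof -
  show "map tl (cons_track xs ws) = ws"
    using assms(1) by (simp add: cons_track_def list_eq_iff_nth_eq)
  show t0: "track 0 (cons_track xs ws) = xs"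
    using assms(1) by (simp add: cons_track_def track_def list_eq_iff_nth_eq)
  have "track (Suc i) (cons_track xs ws) = track i ws" for i
    using assms(1) by (simp add: cons_track_def track_def list_eq_iff_nth_eq)
  moreover have "\<forall>l\<in>set (cons_track xs ws). length l = Suc k"
    using assms(3) by (auto simp: cons_track_def fib_tracks_def dest!: set_zip_rightD)
  ultimately show "fib_tracks (Suc k) (cons_track xs ws)"
    using assms(2,3) t0 unfolding fib_tracks_def by (auto simp: less_Suc_eq_0_disj)
qed

lemma exists_cons_track:
  assumes "fib_tracks k w" and "x < fib (j + length w + 2)"
  shows "\<exists>v. fib_tracks (Suc k) v \<and> map tl v = zeros k j @ w \<and>
    track_vals (Suc k) v = x # track_vals k w"
proof -
  let ?xs = "zeck (j + length w) x"
  have "length ?xs = length (zeros k j @ w)" by simp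
  note v = cons_track[OF this fib_word_zeck[OF assms(2)], of k]
  show ?thesis
    using v assms(1) track_vals_Suc[OF v(1)] zeck_fibval[OF assms(2)] by auto
qed

lemma project_Collect:
  "project k {v. fib_tracks (Suc k) v \<and> P (track_vals (Suc k) v)} =
    {w. fib_tracks k w \<and> (\<exists>x. P (x # track_vals k w))}"
proof (intro set_eqI iffI)
  fix w assume "w \<in> project k {v. fib_tracks (Suc k) v \<and> P (track_vals (Suc k) v)}"
  then show "w \<in> {w. fib_tracks k w \<and> (\<exists>x. P (x # track_vals k w))}"
    unfolding project_def using track_vals_Suc by auto
next
  fix w assume "w \<in> {w. fib_tracks k w \<and> (\<exists>x. P (x # track_vals k w))}"
  then obtain x where w: "fib_tracks k w" "P (x # track_vals k w)" by auto
  have "x < fib (x + length w + 2)"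
    using less_fib_add_2[of x] fib_mono[of "x + 2" "x + length w + 2"] by simp
  then obtain v where "fib_tracks (Suc k) v" "map tl v = zeros k x @ w"
    "track_vals (Suc k) v = x # track_vals k w"
    using exists_cons_track[OF w(1)] by blast
  with w show "w \<in> project k {v. fib_tracks (Suc k) v \<and> P (track_vals (Suc k) v)}"
    unfolding project_def by force
qed

text \<open>Pumping down: among the N + 1 prefixes of the padding two have the same residual,
  and the columns between them can be cut out.\<close>
lemma shorten_padding:
  assumes L: "L \<subseteq> Fib_tracks (Suc k)" and N: "residuals_le (Suc k) L N"
    and v: "v \<in> L" "map tl v = zeros k j @ w" and "N \<le> j"
  shows "\<exists>j'<j. \<exists>v'\<in>L. map tl v' = zeros k j' @ w"
proof -
  let ?f = "\<lambda>i. residual L (take i v)"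
  have "?f ` {0..j} \<subseteq> residuals (Suc k) L"
    using v L by (auto simp: residual_in_residuals fib_tracks_take Fib_tracks_def)
  then have "\<not> inj_on ?f {0..j}"
    using N \<open>N \<le> j\<close> card_inj_on_le[of ?f "{0..j}" "residuals (Suc k) L"]
    by (auto simp: residuals_le_def)
  then obtain i1 i2 where i: "i1 < i2" "i2 \<le> j" "?f i1 = ?f i2"
    unfolding inj_on_def by (metis atLeastAtMost_iff linorder_neqE_nat le0)
  have "drop i2 v \<in> ?f i2" using v(1) by (simp add: residual_def)
  then have "drop i2 v \<in> ?f i1" using i(3) by simp
  then have "take i1 v @ drop i2 v \<in> L" by (simp add: residual_def)
  moreover have "map tl (take i1 v @ drop i2 v) = zeros k (j - (i2 - i1)) @ w"
  proof -
    have "map tl (take i1 v @ drop i2 v) = zeros k i1 @ zeros k (j - i2) @ w"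
      using v(2) i by (simp add: zeros_def flip: take_map drop_map)
    also have "\<dots> = zeros k (j - (i2 - i1)) @ w"
      using i by (simp add: zeros_def replicate_add[symmetric])
    finally show ?thesis .
  qed
  moreover have "j - (i2 - i1) < j" using i by linarith
  ultimately show ?thesis by blast
qed

lemma short_padding:
  assumes "L \<subseteq> Fib_tracks (Suc k)" and "residuals_le (Suc k) L N"
    and "v \<in> L" "map tl v = zeros k j @ w"
  shows "\<exists>j'<N. \<exists>v'\<in>L. map tl v' = zeros k j' @ w"
  using assms(3,4)
proof (induction j arbitrary: v rule: less_induct)
  case (less j)
  show ?case
  proof (cases "j < N")
    case False
    then show ?thesis using shorten_padding[OF assms(1,2) less.prems] less.IH by fastforce
  qed (use less.prems in blast)
qed

lemma short_witness:
  assumes N: "residuals_le (Suc k) {v. fib_tracks (Suc k) v \<and> P (track_vals (Suc k) v)} N"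
    and w: "fib_tracks k w" and "P (x # track_vals k w)"
  shows "\<exists>x'<fib (length w + N + 2). P (x' # track_vals k w)"
proof -
  let ?L = "{v. fib_tracks (Suc k) v \<and> P (track_vals (Suc k) v)}"
  have L: "?L \<subseteq> Fib_tracks (Suc k)" by (auto simp: Fib_tracks_def)
  have "w \<in> project k ?L" using assms by (auto simp: project_Collect)
  then obtain j v where "v \<in> ?L" "map tl v = zeros k j @ w" unfolding project_def by auto
  then obtain j' v' where j': "j' < N" and v': "v' \<in> ?L" "map tl v' = zeros k j' @ w"
    using short_padding[OF L N] by blast
  have "fib_word (track 0 v')" using v' by (simp add: fib_tracks_def)
  then have "fibval (track 0 v') < fib (length v' + 2)" using fibval_less_fib by fastforce
  also have "\<dots> \<le> fib (length w + N + 2)"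
    using j' arg_cong[OF v'(2), of length] by (intro fib_mono) simp
  finally show ?thesis using v' track_vals_Suc[of k v'] by auto
qed

lemma run_append: "run d q (a @ b) = run d (run d q a) b"
  by (induction a arbitrary: q) auto

lemma run_less:
  "length d = 4 * Q \<Longrightarrow> \<forall>x\<in>set d. x < Q \<Longrightarrow> q < Q \<Longrightarrow> \<forall>c\<in>set cs. c < 4 \<Longrightarrow> run d q cs < Q"
proof (induction cs arbitrary: q)
  case (Cons c cs)
  then have "4 * q + c < length d" by simp
  then have "d ! (4 * q + c) < Q" using Cons.prems(2) nth_mem by blast
  with Cons show ?case by simp
qed simp

lemma pair_word_track: "pair_word (track i w) (track j w) = map (\<lambda>l. 2 * l ! i + l ! j) w"
  by (simp add: pair_word_def track_def list_eq_iff_nth_eq)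

lemma residuals_le_synchronized:
  assumes sync: "synchronized (Q, q0, d, F) s" and ij: "i < k" "j < k"
  shows "residuals_le k {w. fib_tracks k w \<and> track_vals k w ! j = s (track_vals k w ! i)}
    ((2 ^ k + 1) * Q)"
proof -
  let ?L = "{w. fib_tracks k w \<and> track_vals k w ! j = s (track_vals k w ! i)}"
  let ?cw = "map (\<lambda>l. 2 * l ! i + l ! j)"
  have wf: "q0 < Q" "length d = 4 * Q" "\<forall>x\<in>set d. x < Q"
    using sync by (auto simp: synchronized_def wf_dfa_def)
  have accept: "track_vals k w ! j = s (track_vals k w ! i) \<longleftrightarrow> run d q0 (?cw w) \<in> set F"
    if "fib_tracks k w" for w
    using sync that ij
    by (auto simp: synchronized_def fib_tracks_def accepts_def simp flip: pair_word_track)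
  have letters: "\<forall>c\<in>set (?cw u). c < 4" if "fib_tracks k u" for u
  proof
    fix c assume "c \<in> set (?cw u)"
    then obtain l where "l \<in> set u" "c = 2 * l ! i + l ! j" by auto
    moreover have "l ! i \<le> 1" "l ! j \<le> 1" if "l \<in> set u"
      using fib_tracks_digit[OF \<open>fib_tracks k u\<close> that] ij by auto
    ultimately show "c < 4" by simp
  qed
  let ?st = "\<lambda>u. (residual (Fib_tracks k) u, run d q0 (?cw u))"
  let ?g = "\<lambda>(G, q). {w. w \<in> G \<and> run d q (?cw w) \<in> set F}"
  have "residuals_le k ?L (card (residuals k (Fib_tracks k) \<times> {..<Q}))"
  proof (rule residuals_le_card[where g = ?g and st = ?st])
    fix u assume u: "fib_tracks k u"
    have "residual ?L u = ?g (?st u)"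
      using accept by (auto simp: residual_def Fib_tracks_def run_append)
    moreover have "?st u \<in> residuals k (Fib_tracks k) \<times> {..<Q}"
      using u residual_in_residuals run_less[OF wf(2,3,1) letters[OF u]] by auto
    ultimately show "residual ?L u = ?g (?st u) \<and> ?st u \<in> residuals k (Fib_tracks k) \<times> {..<Q}" ..
  next
    show "finite (residuals k (Fib_tracks k) \<times> {..<Q})"
      using residuals_le_Fib_tracks by (simp add: residuals_le_def)
  qed
  moreover have "card (residuals k (Fib_tracks k) \<times> {..<Q}) \<le> (2 ^ k + 1) * Q"
  proof -
    have "card (residuals k (Fib_tracks k)) \<le> 2 ^ k + 1"
      using residuals_le_Fib_tracks by (simp add: residuals_le_def)
    from mult_le_mono1[OF this, of Q] show ?thesis by (simp add: card_cartesian_product)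
  qed
  ultimately show ?thesis by (rule residuals_le_mono)
qed

lemma residuals_le_less:
  assumes ij: "i < k" "j < k"
  shows "residuals_le k {w. fib_tracks k w \<and> track_vals k w ! i < track_vals k w ! j}
    ((2 ^ k + 1) * 3)"
proof -
  let ?L = "{w. fib_tracks k w \<and> track_vals k w ! i < track_vals k w ! j}"
  let ?cmp = "\<lambda>u. if fibval (track i u) < fibval (track j u) then 0
    else if fibval (track i u) = fibval (track j u) then 1 else 2 :: nat"
  let ?st = "\<lambda>u. (residual (Fib_tracks k) u, ?cmp u)"
  let ?g = "\<lambda>(G, c). {w. w \<in> G \<and> (c = 0 \<or> c = 1 \<and> fibval (track i w) < fibval (track j w))}"
  have residual: "residual ?L u = ?g (?st u)" if u: "fib_tracks k u" for u
  proof -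
    have "fibval (track i (u @ w)) < fibval (track j (u @ w)) \<longleftrightarrow>
        ?cmp u = 0 \<or> ?cmp u = 1 \<and> fibval (track i w) < fibval (track j w)"
      if "fib_tracks k (u @ w)" for w
    proof -
      have "fib_word (track i u @ track i w)" "fib_word (track j u @ track j w)"
        using that ij by (auto simp: fib_tracks_def)
      moreover have "track i u = track j u \<longleftrightarrow> fibval (track i u) = fibval (track j u)"
        using fibval_eq_iff[of "track i u" "track j u"] u ij by (simp add: fib_tracks_def)
      ultimately show ?thesis
        using fibval_append_less_iff[of "track i u" "track j u" "track i w" "track j w"] by auto
    qed
    then show ?thesis using ij by (auto simp: residual_def Fib_tracks_def)
  qed
  have "residuals_le k ?L (card (residuals k (Fib_tracks k) \<times> {..<3::nat}))"
  proof (rule residuals_le_card[where g = ?g and st = ?st])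
    fix u assume "fib_tracks k u"
    then show "residual ?L u = ?g (?st u) \<and> ?st u \<in> residuals k (Fib_tracks k) \<times> {..<3}"
      using residual residual_in_residuals by simp
  next
    show "finite (residuals k (Fib_tracks k) \<times> {..<3::nat})"
      using residuals_le_Fib_tracks by (simp add: residuals_le_def)
  qed
  moreover have "card (residuals k (Fib_tracks k) \<times> {..<3::nat}) \<le> (2 ^ k + 1) * 3"
    using residuals_le_Fib_tracks[of k]
    by (simp add: residuals_le_def card_cartesian_product del: add_mult_distrib)
  ultimately show ?thesis by (rule residuals_le_mono)
qed

section \<open>First-order formulas\<close>

datatype form =
    FGraph nat nat
  | FGraph' nat nat
  | FLess nat nat
  | FNot form
  | FAnd form form
  | FEx form

fun sat :: "(nat \<Rightarrow> nat) \<Rightarrow> (nat \<Rightarrow> nat) \<Rightarrow> form \<Rightarrow> nat list \<Rightarrow> bool" where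
  "sat s s' (FGraph i j) env = (env ! j = s (env ! i))"
| "sat s s' (FGraph' i j) env = (env ! j = s' (env ! i))"
| "sat s s' (FLess i j) env = (env ! i < env ! j)"
| "sat s s' (FNot p) env = (\<not> sat s s' p env)"
| "sat s s' (FAnd p q) env = (sat s s' p env \<and> sat s s' q env)"
| "sat s s' (FEx p) env = (\<exists>x. sat s s' p (x # env))"

fun wf_form :: "nat \<Rightarrow> form \<Rightarrow> bool" where
  "wf_form k (FGraph i j) = (i < k \<and> j < k)"
| "wf_form k (FGraph' i j) = (i < k \<and> j < k)"
| "wf_form k (FLess i j) = (i < k \<and> j < k)"
| "wf_form k (FNot p) = wf_form k p"
| "wf_form k (FAnd p q) = (wf_form k p \<and> wf_form k q)"
| "wf_form k (FEx p) = wf_form (Suc k) p"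

fun index_bound :: "nat \<Rightarrow> nat \<Rightarrow> nat \<Rightarrow> form \<Rightarrow> nat" where
  "index_bound Q Q' k (FGraph i j) = (2 ^ k + 1) * Q"
| "index_bound Q Q' k (FGraph' i j) = (2 ^ k + 1) * Q'"
| "index_bound Q Q' k (FLess i j) = (2 ^ k + 1) * 3"
| "index_bound Q Q' k (FNot p) = (2 ^ k + 1) * index_bound Q Q' k p"
| "index_bound Q Q' k (FAnd p q) = index_bound Q Q' k p * index_bound Q Q' k q"
| "index_bound Q Q' k (FEx p) = 2 ^ index_bound Q Q' (Suc k) p"

definition form_lang :: "(nat \<Rightarrow> nat) \<Rightarrow> (nat \<Rightarrow> nat) \<Rightarrow> nat \<Rightarrow> form \<Rightarrow> mword set" where
  "form_lang s s' k p = {w. fib_tracks k w \<and> sat s s' p (track_vals k w)}"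

lemma residuals_le_form_lang:
  assumes "synchronized (Q, q0, d, F) s" and "synchronized (Q', q0', d', F') s'"
  shows "wf_form k p \<Longrightarrow> residuals_le k (form_lang s s' k p) (index_bound Q Q' k p)"
proof (induction p arbitrary: k)
  case (FGraph i j)
  then show ?case using residuals_le_synchronized[OF assms(1)] by (simp add: form_lang_def)
next
  case (FGraph' i j)
  then show ?case using residuals_le_synchronized[OF assms(2)] by (simp add: form_lang_def)
next
  case (FLess i j)
  then show ?case using residuals_le_less by (simp add: form_lang_def)
next
  case (FNot p)
  have "form_lang s s' k (FNot p) = Fib_tracks k - form_lang s s' k p"
    by (auto simp: form_lang_def Fib_tracks_def)
  then show ?case using residuals_le_Diff[OF residuals_le_Fib_tracks FNot.IH] FNot.prems by simp
next
  case (FAnd p q)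
  have "form_lang s s' k (FAnd p q) = form_lang s s' k p \<inter> form_lang s s' k q"
    by (auto simp: form_lang_def)
  then show ?case using residuals_le_Int FAnd by simp
next
  case (FEx p)
  have "form_lang s s' k (FEx p) = project k (form_lang s s' (Suc k) p)"
    by (simp add: form_lang_def project_Collect)
  moreover have "form_lang s s' (Suc k) p \<subseteq> Fib_tracks (Suc k)"
    by (auto simp: form_lang_def Fib_tracks_def)
  ultimately show ?case using residuals_le_project FEx by simp
qed

lemma exists_fib_tracks:
  assumes "\<forall>y\<in>set env. y < fib (m + 2)"
  shows "\<exists>w. fib_tracks (length env) w \<and> track_vals (length env) w = env \<and> length w = m"
proof -
  define w where "w = map (\<lambda>t. map (\<lambda>y. zeck m y ! t) env) [0..<m]"
  have track: "track i w = zeck m (env ! i)" if "i < length env" for i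
    using that by (simp add: w_def track_def list_eq_iff_nth_eq)
  have zeck: "fib_word (zeck m (env ! i)) \<and> fibval (zeck m (env ! i)) = env ! i"
    if "i < length env" for i
    using assms that zeck_correct[of "env ! i" m] by simp
  have "\<forall>l\<in>set w. length l = length env" by (auto simp: w_def)
  moreover have "\<forall>i<length env. fib_word (track i w)" using track zeck by simp
  ultimately have "fib_tracks (length env) w" by (simp add: fib_tracks_def)
  moreover have "track_vals (length env) w = env"
    unfolding track_vals_def by (rule nth_equalityI) (simp_all add: track zeck)
  moreover have "length w = m" by (simp add: w_def)
  ultimately show ?thesis by blast
qed

text \<open>Evaluation with every quantifier bounded; the graphs of s and s' are given as predicates
  and the index bound as a parameter, so that all of it can be read off the automata.\<close>
fun sat_bounded ::
  "(nat \<Rightarrow> nat \<Rightarrow> bool) \<Rightarrow> (nat \<Rightarrow> nat \<Rightarrow> bool) \<Rightarrow> (nat \<Rightarrow> form \<Rightarrow> nat) \<Rightarrow> form \<Rightarrow> nat list \<Rightarrow> bool"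
where
  "sat_bounded S S' bd (FGraph i j) env = S (env ! i) (env ! j)"
| "sat_bounded S S' bd (FGraph' i j) env = S' (env ! i) (env ! j)"
| "sat_bounded S S' bd (FLess i j) env = (env ! i < env ! j)"
| "sat_bounded S S' bd (FNot p) env = (\<not> sat_bounded S S' bd p env)"
| "sat_bounded S S' bd (FAnd p q) env = (sat_bounded S S' bd p env \<and> sat_bounded S S' bd q env)"
| "sat_bounded S S' bd (FEx p) env =
     (\<exists>x < fib (sum_list env + bd (Suc (length env)) p + 2). sat_bounded S S' bd p (x # env))"

text \<open>The free variables are written into a word of length sum_list env, so short_witness
  bounds the least witness of an existential quantifier.\<close>
lemma sat_bounded_iff_sat:
  assumes "synchronized (Q, q0, d, F) s" and "synchronized (Q', q0', d', F') s'"
  shows "wf_form (length env) p \<Longrightarrow>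
    sat_bounded (\<lambda>n x. x = s n) (\<lambda>n x. x = s' n) (index_bound Q Q') p env \<longleftrightarrow> sat s s' p env"
proof (induction p arbitrary: env)
  case (FEx p)
  let ?k = "length env"
  have IH: "sat_bounded (\<lambda>n x. x = s n) (\<lambda>n x. x = s' n) (index_bound Q Q') p (x # env) \<longleftrightarrow>
      sat s s' p (x # env)" for x
    using FEx by simp
  have "\<forall>y\<in>set env. y < fib (sum_list env + 2)"
    using member_le_sum_list less_fib_add_2 le_less_trans by blast
  then obtain w where w: "fib_tracks ?k w" "track_vals ?k w = env" "length w = sum_list env"
    using exists_fib_tracks by blast
  have "residuals_le (Suc ?k) (form_lang s s' (Suc ?k) p) (index_bound Q Q' (Suc ?k) p)"
    using residuals_le_form_lang[OF assms] FEx.prems by simp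
  then show ?case
    using short_witness[of ?k "\<lambda>env. sat s s' p env", OF _ w(1)] IH w
    by (auto simp: form_lang_def)
qed auto

section \<open>The distinctness transform\<close>

definition distinctness_form :: form where
  "distinctness_form =
     FAnd (FNot (FEx (FEx (FEx (FAnd (FLess 2 1) (FAnd (FGraph' 2 0) (FGraph' 1 0)))))))
    (FAnd (FNot (FEx (FNot (FEx (FEx (FAnd (FGraph' 1 0) (FGraph 2 0)))))))
    (FAnd (FNot (FEx (FNot (FEx (FEx (FAnd (FGraph 1 0) (FGraph' 2 0)))))))
      (FNot (FEx (FEx (FEx (FEx
        (FAnd (FLess 3 2) (FAnd (FLess 0 1) (FAnd (FEx (FAnd (FGraph 2 0) (FGraph' 4 0)))
        (FAnd (FEx (FAnd (FGraph 1 0) (FGraph' 3 0)))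
        (FAnd (FNot (FEx (FAnd (FLess 0 2) (FEx (FAnd (FGraph 1 0) (FGraph 3 0))))))
          (FNot (FEx (FAnd (FLess 0 1) (FEx (FAnd (FGraph 1 0) (FGraph 2 0))))))))))))))))))"

lemma wf_distinctness_form: "wf_form 0 distinctness_form"
  by (simp add: distinctness_form_def)

lemma sat_distinctness_form:
  "sat s s' distinctness_form [] \<longleftrightarrow>
     (\<forall>i j. i < j \<longrightarrow> s' i \<noteq> s' j) \<and> (\<forall>m. \<exists>i. s' i = s m) \<and> (\<forall>i. \<exists>m. s m = s' i) \<and>
     \<not> (\<exists>i j a b. i < j \<and> b < a \<and> s a = s' i \<and> s b = s' j \<and>
         (\<forall>k<a. s k \<noteq> s a) \<and> (\<forall>k<b. s k \<noteq> s b))"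
  unfolding distinctness_form_def by auto

lemma enumerate_range_strict_mono:
  fixes f :: "nat \<Rightarrow> nat"
  assumes "strict_mono f"
  shows "enumerate (range f) n = f n"
  using assms
proof (induction n arbitrary: f)
  case 0
  then show ?case by (auto simp: enumerate_0 strict_mono_less_eq intro!: Least_equality)
next
  case (Suc n)
  have "(LEAST x. x \<in> range f) = f 0"
    using Suc.prems by (auto simp: strict_mono_less_eq intro!: Least_equality)
  moreover have "range f - {f 0} = range (\<lambda>n. f (Suc n))"
    using Suc.prems by (auto simp: strict_mono_eq) (metis not0_implies_Suc rangeI)
  ultimately have "enumerate (range f) (Suc n) = enumerate (range (\<lambda>n. f (Suc n))) n"
    by (simp only: enumerate_Suc)
  moreover have "strict_mono (\<lambda>n. f (Suc n))"
    using Suc.prems by (simp add: strict_mono_def)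
  ultimately show ?case using Suc.IH by simp
qed

lemma is_distinctness_transform_iff_strict_mono:
  "is_distinctness_transform s s' \<longleftrightarrow>
     (\<exists>f. strict_mono f \<and> range f = first_occ s \<and> (\<forall>i. s' i = s (f i)))"
proof
  assume "is_distinctness_transform s s'"
  then show "\<exists>f. strict_mono f \<and> range f = first_occ s \<and> (\<forall>i. s' i = s (f i))"
    unfolding is_distinctness_transform_def
    by (metis range_enumerate strict_mono_enumerate)
next
  assume "\<exists>f. strict_mono f \<and> range f = first_occ s \<and> (\<forall>i. s' i = s (f i))"
  then obtain f where "strict_mono f" "range f = first_occ s" "\<forall>i. s' i = s (f i)" by blast
  moreover have "infinite (range f)"
    using \<open>strict_mono f\<close> range_inj_infinite strict_mono_imp_inj_on by blast
  ultimately show "is_distinctness_transform s s'"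
    unfolding is_distinctness_transform_def by (metis enumerate_range_strict_mono)
qed

lemma first_occ_unique: "a \<in> first_occ s \<Longrightarrow> b \<in> first_occ s \<Longrightarrow> s a = s b \<Longrightarrow> a = b"
  unfolding first_occ_def by (cases a b rule: linorder_cases) auto

lemma Least_in_first_occ:
  assumes "s m = x"
  shows "(LEAST k. s k = x) \<in> first_occ s"
proof -
  have least: "s (LEAST k. s k = x) = x" using assms by (rule LeastI)
  have "\<forall>k<(LEAST k. s k = x). s k \<noteq> s (LEAST k. s k = x)"
    unfolding least using not_less_Least by blast
  then show ?thesis unfolding first_occ_def by blast
qed

lemma is_distinctness_transformD:
  assumes "is_distinctness_transform s s'"
  shows "i < j \<Longrightarrow> s' i \<noteq> s' j" and "\<exists>i. s' i = s m" and "\<exists>m. s m = s' i"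
    and "i < j \<Longrightarrow> a \<in> first_occ s \<Longrightarrow> b \<in> first_occ s \<Longrightarrow> s a = s' i \<Longrightarrow> s b = s' j \<Longrightarrow> a < b"
proof -
  obtain f where f: "strict_mono f" "range f = first_occ s" "\<And>i. s' i = s (f i)"
    using assms by (auto simp: is_distinctness_transform_iff_strict_mono)
  have f_unique: "a \<in> first_occ s \<Longrightarrow> s a = s' i \<Longrightarrow> a = f i" for a i
    using f first_occ_unique[of a s "f i"] by auto
  show "i < j \<Longrightarrow> s' i \<noteq> s' j"
    using f first_occ_unique by (metis rangeI strict_mono_eq nat_less_le)
  show "\<exists>m. s m = s' i" using f(3) by metis
  show "a < b" if "i < j" "a \<in> first_occ s" "b \<in> first_occ s" "s a = s' i" "s b = s' j"
  proof -
    have "a = f i" "b = f j" using f_unique that by blast+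
    then show ?thesis using f(1) \<open>i < j\<close> by (simp add: strict_mono_less)
  qed
  have "(LEAST k. s k = s m) \<in> range f" using f(2) Least_in_first_occ[of s m] by blast
  then obtain i where "f i = (LEAST k. s k = s m)" by (metis rangeE)
  moreover have "s (LEAST k. s k = s m) = s m" by (rule LeastI) (rule refl)
  ultimately show "\<exists>i. s' i = s m" using f(3) by metis
qed

lemma is_distinctness_transformI:
  assumes inj: "\<And>i j. i < j \<Longrightarrow> s' i \<noteq> s' j" and onto: "\<And>m. \<exists>i. s' i = s m"
    and into: "\<And>i. \<exists>m. s m = s' i"
    and ordered: "\<And>i j a b. i < j \<Longrightarrow> a \<in> first_occ s \<Longrightarrow> b \<in> first_occ s \<Longrightarrow>
      s a = s' i \<Longrightarrow> s b = s' j \<Longrightarrow> a < b"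
  shows "is_distinctness_transform s s'"
proof -
  define f where "f i = (LEAST m. s m = s' i)" for i
  have sf: "s (f i) = s' i" for i
    unfolding f_def by (rule LeastI_ex) (rule into)
  have f_first: "f i \<in> first_occ s" for i
    unfolding f_def using into Least_in_first_occ by metis
  have "strict_mono f"
    using ordered f_first sf by (intro strict_monoI) blast
  moreover have "range f = first_occ s"
  proof (intro antisym subsetI)
    fix d assume d: "d \<in> first_occ s"
    obtain i where "s' i = s d" using onto by blast
    then have "f i = d" using first_occ_unique[OF f_first d] sf by metis
    then show "d \<in> range f" by blast
  qed (use f_first in auto)
  ultimately show ?thesis
    unfolding is_distinctness_transform_iff_strict_mono using sf by metis
qed

lemma is_distinctness_transform_iff:
  "is_distinctness_transform s s' \<longleftrightarrow>
     (\<forall>i j. i < j \<longrightarrow> s' i \<noteq> s' j) \<and> (\<forall>m. \<exists>i. s' i = s m) \<and> (\<forall>i. \<exists>m. s m = s' i) \<and>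
     \<not> (\<exists>i j a b. i < j \<and> b < a \<and> s a = s' i \<and> s b = s' j \<and>
         (\<forall>k<a. s k \<noteq> s a) \<and> (\<forall>k<b. s k \<noteq> s b))"
  (is "_ \<longleftrightarrow> ?inj \<and> ?onto \<and> ?into \<and> \<not> ?inversion")
proof
  assume dt: "is_distinctness_transform s s'"
  have "\<not> ?inversion"
  proof
    assume ?inversion
    then obtain i j a b where "i < j" "b < a" "s a = s' i" "s b = s' j"
      "a \<in> first_occ s" "b \<in> first_occ s"
      unfolding first_occ_def by blast
    then show False using is_distinctness_transformD(4)[OF dt, of i j a b] by simp
  qed
  then show "?inj \<and> ?onto \<and> ?into \<and> \<not> ?inversion"
    using is_distinctness_transformD(1-3)[OF dt] by blast
next
  assume "?inj \<and> ?onto \<and> ?into \<and> \<not> ?inversion"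
  then have inj: ?inj and onto: ?onto and into: ?into and no_inversion: "\<not> ?inversion"
    by simp_all
  show "is_distinctness_transform s s'"
  proof (rule is_distinctness_transformI)
    fix i j a b
    assume ij: "i < j" and ab: "a \<in> first_occ s" "b \<in> first_occ s" "s a = s' i" "s b = s' j"
    then have "a \<noteq> b" using inj by metis
    moreover have "\<not> b < a" using no_inversion ij ab unfolding first_occ_def by blast
    ultimately show "a < b" by simp
  qed (use inj onto into in blast)+
qed

section \<open>Evaluating the sentence primitive recursively\<close>

definition dfa_code_init :: "nat \<Rightarrow> nat" where
  "dfa_code_init c = fst (prod_decode (snd (prod_decode c)))"
definition dfa_code_delta :: "nat \<Rightarrow> nat" where
  "dfa_code_delta c = fst (prod_decode (snd (prod_decode (snd (prod_decode c)))))"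
definition dfa_code_final :: "nat \<Rightarrow> nat" where
  "dfa_code_final c = snd (prod_decode (snd (prod_decode (snd (prod_decode c)))))"

lemma dfa_code_code_dfa [simp]:
  "fst (prod_decode (code_dfa (Q, q0, d, F))) = Q"
  "dfa_code_init (code_dfa (Q, q0, d, F)) = q0"
  "dfa_code_delta (code_dfa (Q, q0, d, F)) = list_encode d"
  "dfa_code_final (code_dfa (Q, q0, d, F)) = list_encode F"
  by (simp_all add: code_dfa_def dfa_code_init_def dfa_code_delta_def dfa_code_final_def)

text \<open>zeck_rem L n t is the value still to be represented after the first t digits of zeck L n.\<close>
fun zeck_rem :: "nat \<Rightarrow> nat \<Rightarrow> nat \<Rightarrow> nat" where
  "zeck_rem L n 0 = n"
| "zeck_rem L n (Suc t) =
     (if fib (L - t + 1) \<le> zeck_rem L n t then zeck_rem L n t - fib (L - t + 1) else zeck_rem L n t)"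

definition zeck_digit :: "nat \<Rightarrow> nat \<Rightarrow> nat \<Rightarrow> nat" where
  "zeck_digit L n t = (if fib (L - t + 1) \<le> zeck_rem L n t then 1 else 0)"

lemma drop_zeck: "t \<le> L \<Longrightarrow> drop t (zeck L n) = zeck (L - t) (zeck_rem L n t)"
proof (induction t)
  case (Suc t)
  then obtain l where l: "L - t = Suc l" by (metis Suc_diff_le diff_Suc_Suc less_eq_Suc_le)
  have "drop (Suc t) (zeck L n) = tl (drop t (zeck L n))" by (simp add: drop_Suc tl_drop)
  also have "\<dots> = zeck l (zeck_rem L n (Suc t))" using Suc l by (simp add: numeral_eq_Suc)
  also have "l = L - Suc t" using l by simp
  finally show ?case .
qed simp

lemma nth_zeck: "t < L \<Longrightarrow> zeck L n ! t = zeck_digit L n t"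
proof -
  assume t: "t < L"
  then obtain l where l: "L - t = Suc l" by (metis Suc_diff_Suc)
  have "zeck L n ! t = hd (drop t (zeck L n))" using t by (simp add: hd_drop_conv_nth)
  also have "\<dots> = zeck_digit L n t"
    using t l by (simp add: drop_zeck zeck_digit_def numeral_eq_Suc)
  finally show ?thesis .
qed

text \<open>The run of a coded transition table on the pair of representations of length L of n and x.\<close>
fun run_code :: "nat \<Rightarrow> nat \<Rightarrow> nat \<Rightarrow> nat \<Rightarrow> nat \<Rightarrow> nat \<Rightarrow> nat" where
  "run_code dc q0 L n x 0 = q0"
| "run_code dc q0 L n x (Suc t) =
     list_code_nth (4 * run_code dc q0 L n x t + (2 * zeck_digit L n t + zeck_digit L x t)) dc"

definition accepts_code :: "nat \<Rightarrow> nat \<Rightarrow> nat \<Rightarrow> bool" where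
  "accepts_code c n x \<longleftrightarrow> list_code_member
     (run_code (dfa_code_delta c) (dfa_code_init c) (n + x + 1) n x (n + x + 1)) (dfa_code_final c)"

lemma run_code_eq_run:
  assumes wf: "wf_dfa (Q, q0, d, F)" and "t \<le> L"
  shows "run_code (list_encode d) q0 L n x t = run d q0 (take t (pair_word (zeck L n) (zeck L x)))"
  using \<open>t \<le> L\<close>
proof (induction t)
  case (Suc t)
  let ?w = "pair_word (zeck L n) (zeck L x)"
  have letter: "?w ! t = 2 * zeck_digit L n t + zeck_digit L x t"
    using Suc.prems by (simp add: pair_word_def nth_zeck)
  have "\<forall>c\<in>set ?w. c < 4"
    by (auto simp: pair_word_def set_zip fib_word_def zeck_digit_def nth_zeck)
  then have "run d q0 (take t ?w) < Q"
    using wf by (intro run_less[of d Q]) (auto simp: wf_dfa_def dest: in_set_takeD)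
  then have "4 * run d q0 (take t ?w) + ?w ! t < length d"
    using wf by (simp add: wf_dfa_def letter zeck_digit_def)
  moreover have "take (Suc t) ?w = take t ?w @ [?w ! t]"
    using Suc.prems by (simp add: take_Suc_conv_app_nth pair_word_def)
  ultimately show ?case
    using Suc by (simp add: run_append list_code_nth_list_encode letter)
qed simp

lemma accepts_code_code_dfa:
  assumes sync: "synchronized A s"
  shows "accepts_code (code_dfa A) n x \<longleftrightarrow> x = s n"
proof -
  obtain Q q0 d F where A: "A = (Q, q0, d, F)" by (cases A) auto
  define L where "L = n + x + 1"
  have "n < fib (L + 2)" "x < fib (L + 2)"
    using less_fib_add_2[of n] less_fib_add_2[of x] fib_mono[of "n + 2" "L + 2"]
      fib_mono[of "x + 2" "L + 2"]
    unfolding L_def by linarith+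
  then have zeck: "fib_word (zeck L n)" "fibval (zeck L n) = n"
    "fib_word (zeck L x)" "fibval (zeck L x) = x"
    by (simp_all add: zeck_fibval fib_word_zeck)
  have "run_code (list_encode d) q0 L n x L = run d q0 (pair_word (zeck L n) (zeck L x))"
    using sync run_code_eq_run[of Q q0 d F L L n x] by (simp add: A synchronized_def pair_word_def)
  then have "accepts_code (code_dfa A) n x \<longleftrightarrow> accepts A (pair_word (zeck L n) (zeck L x))"
    unfolding accepts_code_def A dfa_code_code_dfa L_def[symmetric]
    by (simp add: accepts_def list_code_member_list_encode)
  also have "\<dots> \<longleftrightarrow> x = s n"
    using sync zeck by (simp add: synchronized_def)
  finally show ?thesis .
qed

definition p_zeck_rem :: "pexp \<Rightarrow> pexp \<Rightarrow> pexp \<Rightarrow> pexp" where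
  "p_zeck_rem L n t = (let f = p_fib (PAdd (PSub (lift2 L) (PVar 0)) (PConst 1))
     in PRec t n (p_if (p_le f (PVar 1)) (PSub (PVar 1) f) (PVar 1)))"

lemma peval_p_zeck_rem [simp]:
  "peval (p_zeck_rem L n t) env = zeck_rem (peval L env) (peval n env) (peval t env)"
proof -
  let ?f = "p_fib (PAdd (PSub (lift2 L) (PVar 0)) (PConst 1))"
  have "rec_nat (peval n env)
      (\<lambda>t acc. peval (p_if (p_le ?f (PVar 1)) (PSub (PVar 1) ?f) (PVar 1)) (t # acc # env)) m
     = zeck_rem (peval L env) (peval n env) m" for m
    by (induction m) auto
  then show ?thesis by (simp only: p_zeck_rem_def Let_def peval.simps(6))
qed

definition p_zeck_digit :: "pexp \<Rightarrow> pexp \<Rightarrow> pexp \<Rightarrow> pexp" where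
  "p_zeck_digit L n t = p_le (p_fib (PAdd (PSub L t) (PConst 1))) (p_zeck_rem L n t)"

lemma peval_p_zeck_digit [simp]:
  "peval (p_zeck_digit L n t) env = zeck_digit (peval L env) (peval n env) (peval t env)"
  by (simp add: p_zeck_digit_def zeck_digit_def)

definition p_run_code :: "pexp \<Rightarrow> pexp \<Rightarrow> pexp \<Rightarrow> pexp \<Rightarrow> pexp" where
  "p_run_code c L n x = PRec L (p_fst (p_snd c))
     (p_nth (PAdd (PMul (PConst 4) (PVar 1))
         (PAdd (PMul (PConst 2) (p_zeck_digit (lift2 L) (lift2 n) (PVar 0)))
           (p_zeck_digit (lift2 L) (lift2 x) (PVar 0))))
       (p_fst (p_snd (p_snd (lift2 c)))))"

lemma peval_p_run_code [simp]:
  "peval (p_run_code c L n x) env = run_code (dfa_code_delta (peval c env)) (dfa_code_init (peval c env))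
     (peval L env) (peval n env) (peval x env) (peval L env)"
proof -
  let ?step = "p_nth (PAdd (PMul (PConst 4) (PVar 1))
      (PAdd (PMul (PConst 2) (p_zeck_digit (lift2 L) (lift2 n) (PVar 0)))
        (p_zeck_digit (lift2 L) (lift2 x) (PVar 0))))
    (p_fst (p_snd (p_snd (lift2 c))))"
  have "rec_nat (dfa_code_init (peval c env)) (\<lambda>t acc. peval ?step (t # acc # env)) m =
      run_code (dfa_code_delta (peval c env)) (dfa_code_init (peval c env))
        (peval L env) (peval n env) (peval x env) m" for m
    by (induction m) (auto simp: dfa_code_delta_def)
  then show ?thesis by (simp add: p_run_code_def dfa_code_init_def)
qed

definition p_accepts :: "pexp \<Rightarrow> pexp \<Rightarrow> pexp \<Rightarrow> pexp" where
  "p_accepts c n x =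
     p_member (p_run_code c (PAdd (PAdd n x) (PConst 1)) n x) (p_snd (p_snd (p_snd c)))"

lemma peval_p_accepts [simp]:
  "peval (p_accepts c n x) env = (if accepts_code (peval c env) (peval n env) (peval x env) then 1 else 0)"
  by (simp add: p_accepts_def accepts_code_def dfa_code_final_def)

fun p_sum_vars :: "nat \<Rightarrow> pexp" where
  "p_sum_vars 0 = PConst 0"
| "p_sum_vars (Suc k) = PAdd (p_sum_vars k) (PVar k)"

lemma peval_p_sum_vars: "length ys = k \<Longrightarrow> peval (p_sum_vars k) (ys @ zs) = sum_list ys"
proof (induction k arbitrary: ys zs)
  case (Suc k)
  then obtain ys' y where ys: "ys = ys' @ [y]" "length ys' = k"
    by (metis length_Suc_conv_rev length_append_singleton Suc_inject)
  then show ?case using Suc.IH[of ys' "y # zs"] by (simp add: nth_append)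
qed simp

fun p_index_bound :: "pexp \<Rightarrow> pexp \<Rightarrow> nat \<Rightarrow> form \<Rightarrow> pexp" where
  "p_index_bound q q' k (FGraph i j) = PMul (PConst (2 ^ k + 1)) q"
| "p_index_bound q q' k (FGraph' i j) = PMul (PConst (2 ^ k + 1)) q'"
| "p_index_bound q q' k (FLess i j) = PConst ((2 ^ k + 1) * 3)"
| "p_index_bound q q' k (FNot p) = PMul (PConst (2 ^ k + 1)) (p_index_bound q q' k p)"
| "p_index_bound q q' k (FAnd p r) = PMul (p_index_bound q q' k p) (p_index_bound q q' k r)"
| "p_index_bound q q' k (FEx p) = p_pow2 (p_index_bound q q' (Suc k) p)"

lemma peval_p_index_bound [simp]:
  "peval (p_index_bound q q' k p) env = index_bound (peval q env) (peval q' env) k p"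
  by (induction q q' k p rule: p_index_bound.induct) auto

text \<open>In p_sat k p the k free variables of p occupy the first k places of the environment,
  followed by the codes of the two automata.\<close>
fun p_sat :: "nat \<Rightarrow> form \<Rightarrow> pexp" where
  "p_sat k (FGraph i j) = p_accepts (PVar k) (PVar i) (PVar j)"
| "p_sat k (FGraph' i j) = p_accepts (PVar (Suc k)) (PVar i) (PVar j)"
| "p_sat k (FLess i j) = p_le (PAdd (PVar i) (PConst 1)) (PVar j)"
| "p_sat k (FNot p) = p_not (p_sat k p)"
| "p_sat k (FAnd p q) = PMul (p_sat k p) (p_sat k q)"
| "p_sat k (FEx p) =
     p_bex (p_fib (PAdd (PAdd (p_sum_vars k)
         (p_index_bound (p_fst (PVar k)) (p_fst (PVar (Suc k))) (Suc k) p)) (PConst 2)))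
       (p_sat (Suc k) p)"

lemma peval_p_sat:
  "wf_form k p \<Longrightarrow> length ys = k \<Longrightarrow>
   peval (p_sat k p) (ys @ [a, b]) =
     (if sat_bounded (accepts_code a) (accepts_code b)
        (index_bound (fst (prod_decode a)) (fst (prod_decode b))) p ys then 1 else 0)"
proof (induction k p arbitrary: ys rule: p_sat.induct)
  case (6 k p)
  have IH: "peval (p_sat (Suc k) p) (x # ys @ [a, b]) =
      (if sat_bounded (accepts_code a) (accepts_code b)
         (index_bound (fst (prod_decode a)) (fst (prod_decode b))) p (x # ys) then 1 else 0)" for x
    using "6.IH"[of "x # ys"] "6.prems" by simp
  have "peval (p_sum_vars k) (ys @ [a, b]) = sum_list ys"
    using "6.prems" by (simp add: peval_p_sum_vars)
  moreover have "(ys @ [a, b]) ! k = a" "(ys @ [a, b]) ! Suc k = b"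
    using "6.prems" by (auto simp: nth_append)
  ultimately show ?case using IH "6.prems"(2) by (simp; blast)
qed (auto simp: nth_append)

theorem theorem18:
  shows "\<exists>f :: recf.
     (\<forall>a b. \<exists>r. eval f [a, b] r) \<and>
     (\<forall>A A' s s'. synchronized A s \<longrightarrow> synchronized A' s' \<longrightarrow>
        eval f [code_dfa A, code_dfa A']
          (if is_distinctness_transform s s' then 1 else 0))"
proof (rule exI[of _ "compile 2 (p_sat 0 distinctness_form)"], intro conjI allI impI)
  let ?f = "compile 2 (p_sat 0 distinctness_form)"
  show "\<exists>r. eval ?f [a, b] r" for a b
    using eval_compile[of "[a, b]" 2] by auto
  fix A A' s s'
  assume sync: "synchronized A s" "synchronized A' s'"
  obtain Q q0 d F Q' q0' d' F' where A: "A = (Q, q0, d, F)" "A' = (Q', q0', d', F')"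
    by (cases A, cases A') auto
  have "accepts_code (code_dfa A) = (\<lambda>n x. x = s n)" "accepts_code (code_dfa A') = (\<lambda>n x. x = s' n)"
    using accepts_code_code_dfa[OF sync(1)] accepts_code_code_dfa[OF sync(2)] by blast+
  then have "peval (p_sat 0 distinctness_form) [code_dfa A, code_dfa A'] =
      (if sat s s' distinctness_form [] then 1 else 0)"
    using peval_p_sat[OF wf_distinctness_form, of "[]"]
      sat_bounded_iff_sat[OF sync[unfolded A], of "[]"] wf_distinctness_form
    by (simp add: A)
  also have "sat s s' distinctness_form [] \<longleftrightarrow> is_distinctness_transform s s'"
    by (simp only: sat_distinctness_form is_distinctness_transform_iff)
  finally show "eval ?f [code_dfa A, code_dfa A'] (if is_distinctness_transform s s' then 1 else 0)"
    using eval_compile[of "[code_dfa A, code_dfa A']" 2 "p_sat 0 distinctness_form"] by simp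
qed

end
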